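(* Let $q\ge2$ be an even integer. The interpolated fusion ring $\mathcal{R}_q$ has rank $q+1$ and Frobenius–Perron dimension $q(q^2-1)$, its basis consists of $x_{1,1}$, $x_{q-1,c}$ ($1\le c\le q/2$), $x_{q,1}$, $x_{q+1,c}$ ($1\le c\le (q-2)/2$) with $\mathrm{FPdim}(x_{d,c})=d$, and its fusion rules are (all sums over $c_3$, resp. $c_2$, run over the allowed index range of the corresponding basis elements): $x_{q-1,c_1}x_{q-1,c_2}=\delta_{c_1,c_2}x_{1,1}+\sum_{c_3:\ c_1+c_2+c_3\notin\{q+1,\,2\max(c_1,c_2,c_3)\}}x_{q-1,c_3}+(1-\delta_{c_1,c_2})x_{q,1}+\sum_{c_3}x_{q+1,c_3}$; $x_{q-1,c_1}x_{q,1}=\sum_{c_2}(1-\delta_{c_1,c_2})x_{q-1,c_2}+x_{q,1}+\sum_{c_2}x_{q+1,c_2}$; $x_{q-1,c_1}x_{q+1,c_2}=\sum_{c_3}x_{q-1,c_3}+x_{q,1}+\sum_{c_3}x_{q+1,c_3}$; $x_{q,1}x_{q,1}=x_{1,1}+\sum_cx_{q-1,c}+x_{q,1}+\sum_cx_{q+1,c}$; $x_{q,1}x_{q+1,c_1}=\sum_{c_2}x_{q-1,c_2}+x_{q,1}+\sum_{c_2}(1+\delta_{c_1,c_2})x_{q+1,c_2}$; $x_{q+1,c_1}x_{q+1,c_2}=\delta_{c_1,c_2}x_{1,1}+\sum_{c_3}x_{q-1,c_3}+(1+\delta_{c_1,c_2})x_{q,1}+\sum_{c_3:\ c_1+c_2+c_3\notin\{q-1,\,2\max(c_1,c_2,c_3)\}}x_{q+1,c_3}+\sum_{c_3:\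 c_1+c_2+c_3\in\{q-1,\,2\max(c_1,c_2,c_3)\}}2x_{q+1,c_3}$; and $x_{1,1}$ is the unit; the remaining products follow by commutativity.
   Context: $\zeta_n=\exp(2\pi i/n)$. A fusion ring is a ring which is a free $\mathbb{Z}$-module with finite basis, nonnegative integer structure constants, a unit basis element, a duality on the basis and Frobenius reciprocity; $\mathrm{FPdim}$ is the unique ring homomorphism to $\mathbb{C}$ positive on the basis, and $\mathrm{FPdim}$ of the ring is $\sum_b\mathrm{FPdim}(b)^2$. For even $q\ge2$, $\mathcal{R}_q$ is the commutative fusion ring whose basis is the set of rows of the following formal table $(\lambda_{x,s})$ and whose structure constants are $N_{x,y}^z=\sum_s\lambda_{x,s}\lambda_{y,s}\overline{\lambda_{z,s}}/\mathfrak{c}_s$ with $\mathfrak{c}_s=\sum_x|\lambda_{x,s}|^2$. Columns: $C_0$; $C_1$; $A_k$ ($1\le k\le\frac{q-2}{2}$); $B_k$ ($1\le k\le\frac q2$). Rows (entries in that column order): $x_{1,1}$: $1,1,1,1$. $x_{q-1,c}$ ($1\le c\le \frac q2$): $q-1,\,-1,\,0,\,-\zeta_{q+1}^{kc}-\zeta_{q+1}^{-kc}$. $x_{q,1}$: $q,0,1,-1$. $x_{q+1,c}$ ($1\le c\le\frac{q-2}{2}$): $q+1,\,1,\,\zeta_{q-1}^{kc}+\zeta_{q-1}^{-kc},\,0$. (For $q$ a power of $2$ this is the character table of $\mathrm{PSL}(2,q)$.) *)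

theory Defs
  imports Complex_Main
begin

definition zeta :: "nat \<Rightarrow> complex" where
  "zeta n = exp (2 * of_real pi * \<i> / of_nat n)"

text \<open>Basis labels: One = x_{1,1}, Xm c = x_{q-1,c}, Xq = x_{q,1}, Xp c = x_{q+1,c}.\<close>
datatype lbl = One | Xm nat | Xq | Xp nat

datatype col = C0 | C1 | A nat | B nat

definition basis :: "nat \<Rightarrow> lbl set" where
  "basis q = {One} \<union> Xm ` {1..q div 2} \<union> {Xq} \<union> Xp ` {1..(q - 2) div 2}"

definition cols :: "nat \<Rightarrow> col set" where
  "cols q = {C0, C1} \<union> A ` {1..(q - 2) div 2} \<union> B ` {1..q div 2}"

fun lam :: "nat \<Rightarrow> lbl \<Rightarrow> col \<Rightarrow> complex" where
  "lam q One s = 1"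
| "lam q (Xm c) C0 = of_nat q - 1"
| "lam q (Xm c) C1 = -1"
| "lam q (Xm c) (A k) = 0"
| "lam q (Xm c) (B k) = - (zeta (q+1) ^ (k*c) + inverse (zeta (q+1) ^ (k*c)))"
| "lam q Xq C0 = of_nat q"
| "lam q Xq C1 = 0"
| "lam q Xq (A k) = 1"
| "lam q Xq (B k) = -1"
| "lam q (Xp c) C0 = of_nat q + 1"
| "lam q (Xp c) C1 = 1"
| "lam q (Xp c) (A k) = zeta (q-1) ^ (k*c) + inverse (zeta (q-1) ^ (k*c))"
| "lam q (Xp c) (B k) = 0"

definition colnorm :: "nat \<Rightarrow> col \<Rightarrow> complex" where
  "colnorm q s = (\<Sum>x\<in>basis q. of_real ((cmod (lam q x s))\<^sup>2))"

definition fus :: "nat \<Rightarrow> lbl \<Rightarrow> lbl \<Rightarrow> lbl \<Rightarrow> complex" where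
  "fus q x y z = (\<Sum>s\<in>cols q. lam q x s * lam q y s * cnj (lam q z s) / colnorm q s)"

text \<open>Ring homomorphisms R_q -> C that are positive on the basis
  (determined by their values on the basis; extended by 0 off the basis).\<close>
definition is_pos_hom :: "nat \<Rightarrow> (lbl \<Rightarrow> complex) \<Rightarrow> bool" where
  "is_pos_hom q f \<longleftrightarrow>
     f One = 1 \<and>
     (\<forall>x\<in>basis q. \<forall>y\<in>basis q. f x * f y = (\<Sum>z\<in>basis q. fus q x y z * f z)) \<and>
     (\<forall>x\<in>basis q. Im (f x) = 0 \<and> 0 < Re (f x)) \<and>
     (\<forall>x. x \<notin> basis q \<longrightarrow> f x = 0)"

definition fpdim :: "nat \<Rightarrow> lbl \<Rightarrow> complex" where
  "fpdim q = (THE f. is_pos_hom q f)"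

definition fpdim_ring :: "nat \<Rightarrow> complex" where
  "fpdim_ring q = (\<Sum>b\<in>basis q. (fpdim q b)\<^sup>2)"

end

theory Submission
  imports Defs "HOL-Library.Real_Mod"
begin

(* In every column A_k (resp. B_k) each entry of the table has the form p + b (z^{kc} + z^{-kc})
   with z a primitive root of unity of odd order m = q - 1 (resp. q + 1), and k runs over
   1..(m-1)/2.  Expanding a product of three such entries with
   2cos(a) 2cos(b) = 2cos(a + b) + 2cos(a - b) reduces every structure constant to the sums
   sum_k (z^{jk} + z^{-jk}), which equal m [m | j] - 1; the fusion rules are then integer
   bookkeeping.  The column C_0 is orthogonal to all other columns, so x |-> lambda_{x,C_0} is a
   ring homomorphism, positive on the basis.  Conversely, for a positive homomorphism f the
   products with x_{q,1} force f(x_{q-1,c}) = f(x_{q,1}) - 1 and f(x_{q+1,c}) = f(x_{q,1}) + 1,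
   and then x_{q,1}^2 forces f(x_{q,1}) = q. *)

section \<open>Cosine sums over roots of unity of odd order\<close>

definition unity_root :: "nat \<Rightarrow> int \<Rightarrow> complex" where
  "unity_root m t = cis (2 * pi * of_int t / of_nat m)"

lemma unity_root_add: "unity_root m (a + b) = unity_root m a * unity_root m b"
  unfolding unity_root_def cis_mult by (simp add: distrib_left add_divide_distrib)

lemma unity_root_0 [simp]: "unity_root m 0 = 1"
  by (simp add: unity_root_def)

lemma unity_root_eq_1_iff:
  assumes "m > 0"
  shows "unity_root m t = 1 \<longleftrightarrow> int m dvd t"
proof -
  have "unity_root m t = 1 \<longleftrightarrow> (\<exists>n. real_of_int t = of_int n * real m)"
    unfolding unity_root_def cis_eq_1_iff using assms by (simp add: field_simps)
  also have "\<dots> \<longleftrightarrow> int m dvd t"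
    by (metis (mono_tags, opaque_lifting) dvd_def mult.commute of_int_eq_iff of_int_mult of_int_of_nat_eq)
  finally show ?thesis .
qed

lemma zeta_power: "zeta m ^ n = unity_root m (int n)"
proof -
  have "zeta m = cis (2 * pi / of_nat m)"
    unfolding zeta_def cis_conv_exp by (simp add: field_simps)
  then show ?thesis
    unfolding unity_root_def by (simp add: DeMoivre field_simps)
qed

lemma inverse_unity_root: "inverse (unity_root m t) = unity_root m (- t)"
  by (simp add: unity_root_def)

lemma cnj_unity_root: "cnj (unity_root m t) = unity_root m (- t)"
  by (simp add: unity_root_def cis_cnj)

lemma unity_root_power: "unity_root m t ^ k = unity_root m (t * int k)"
  by (induction k) (simp_all add: unity_root_add algebra_simps)

lemma sum_unity_root:
  assumes "m > 0"
  shows "(\<Sum>k<m. unity_root m (t * int k)) = (if int m dvd t then of_nat m else 0)"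
proof (cases "int m dvd t")
  case True
  then have "unity_root m (t * int k) = 1" for k
    using assms by (simp add: unity_root_eq_1_iff)
  then show ?thesis using True by simp
next
  case False
  then have "unity_root m t \<noteq> 1" and "unity_root m t ^ m = 1"
    using assms by (simp_all add: unity_root_eq_1_iff unity_root_power)
  then have "(\<Sum>k<m. unity_root m t ^ k) = 0"
    by (simp add: geometric_sum)
  then show ?thesis using False by (simp add: unity_root_power)
qed

definition twocos :: "nat \<Rightarrow> int \<Rightarrow> nat \<Rightarrow> complex" where
  "twocos m j k = unity_root m (j * int k) + unity_root m (- (j * int k))"

lemma twocos_mult: "twocos m a k * twocos m b k = twocos m (a + b) k + twocos m (a - b) k"
  unfolding twocos_def by (simp add: unity_root_add[symmetric] algebra_simps)

lemma cnj_twocos: "cnj (twocos m j k) = twocos m j k"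
  by (simp add: twocos_def cnj_unity_root)

lemma twocos_commute: "twocos m (int a) b = twocos m (int b) a"
  by (simp add: twocos_def mult.commute)

lemma zeta_power_add_inverse: "zeta m ^ (k * c) + inverse (zeta m ^ (k * c)) = twocos m (int c) k"
  by (simp add: twocos_def zeta_power inverse_unity_root mult.commute)

lemma sum_twocos:
  assumes m: "m = 2 * h + 1"
  shows "(\<Sum>k\<in>{1..h}. twocos m j k) = (if int m dvd j then of_nat m - 1 else -1)"
proof -
  have "(\<Sum>k\<in>{1..h}. unity_root m (- (j * int k))) = (\<Sum>k\<in>{h+1..2*h}. unity_root m (j * int k))"
  proof (rule sum.reindex_bij_witness[of _ "\<lambda>k. m - k" "\<lambda>k. m - k"])
    fix k assume "k \<in> {1..h}"
    then have "j * int (m - k) = - (j * int k) + int m * j"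
      using m by (simp add: of_nat_diff algebra_simps)
    moreover have "unity_root m (int m * j) = 1"
      using m by (simp add: unity_root_eq_1_iff)
    ultimately show "unity_root m (j * int (m - k)) = unity_root m (- (j * int k))"
      using unity_root_add[of m "- (j * int k)" "int m * j"] by simp
  qed (use m in auto)
  moreover have "{1..2*h} = {1..h} \<union> {h+1..2*h}"
    by auto
  ultimately have "(\<Sum>k\<in>{1..h}. twocos m j k) = (\<Sum>k\<in>{1..2*h}. unity_root m (j * int k))"
    unfolding twocos_def sum.distrib by (simp add: sum.union_disjoint)
  also have "\<dots> = (\<Sum>k<m. unity_root m (j * int k)) - 1"
  proof -
    have "{..<m} = insert 0 {1..2*h}" using m by auto
    then show ?thesis by simp
  qed
  finally show ?thesis using sum_unity_root[of m j] m by simp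
qed

lemma int_dvd_iff_eq_0: "\<bar>j\<bar> < int m \<Longrightarrow> int m dvd j \<longleftrightarrow> j = 0"
  using dvd_imp_le_int[of j "int m"] by auto

lemma int_dvd_iff_eq_self: "0 < j \<Longrightarrow> j < 2 * int m \<Longrightarrow> int m dvd j \<longleftrightarrow> j = int m"
  using int_dvd_iff_eq_0[of "j - int m" m] dvd_diff[of "int m" j "int m"] dvd_add[of "int m" "j - int m" "int m"]
  by auto

lemma sum_twocos_single:
  assumes "m = 2 * h + 1" "a \<in> {1..h}"
  shows "(\<Sum>k\<in>{1..h}. twocos m (int a) k) = -1"
proof -
  have "\<not> int m dvd int a"
    using assms by (subst int_dvd_iff_eq_0) auto
  then show ?thesis
    unfolding sum_twocos[OF assms(1)] by simp
qed

lemma sum_twocos_pair: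
  assumes m: "m = 2 * h + 1" and "a \<in> {1..h}" "b \<in> {1..h}"
  shows "(\<Sum>k\<in>{1..h}. twocos m (int a) k * twocos m (int b) k) = of_nat m * of_bool (a = b) - 2"
proof -
  have "\<not> int m dvd int a + int b"
    using assms by (subst int_dvd_iff_eq_self) auto
  moreover have "int m dvd int a - int b \<longleftrightarrow> a = b"
    using assms by (subst int_dvd_iff_eq_0) auto
  ultimately show ?thesis
    unfolding twocos_mult sum.distrib sum_twocos[OF m] by simp
qed

(* For 1 <= a, b, c <= (m - 1) / 2: the number of sign choices with a +- b +- c = 0 (mod m). *)
definition zero_sum_count :: "nat \<Rightarrow> nat \<Rightarrow> nat \<Rightarrow> nat \<Rightarrow> nat" where
  "zero_sum_count m a b c = of_bool (a + b + c = m) + of_bool (a + b = c) + of_bool (a + c = b) + of_bool (b + c = a)"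

lemma zero_sum_count_eq:
  assumes "odd m" "1 \<le> a" "1 \<le> b" "1 \<le> c"
  shows "zero_sum_count m a b c = of_bool (a + b + c \<in> {m, 2 * max a (max b c)})"
  using assms unfolding zero_sum_count_def max_def by (auto; presburger)

lemma sum_twocos_triple:
  assumes m: "m = 2 * h + 1" and "a \<in> {1..h}" "b \<in> {1..h}" "c \<in> {1..h}"
  shows "(\<Sum>k\<in>{1..h}. twocos m (int a) k * twocos m (int b) k * twocos m (int c) k) =
    of_nat m * of_nat (zero_sum_count m a b c) - 4"
proof -
  have "int m dvd int a + int b + int c \<longleftrightarrow> a + b + c = m"
    using assms by (subst int_dvd_iff_eq_self) auto
  moreover have "int m dvd int a + int b - int c \<longleftrightarrow> a + b = c"
    using assms by (subst int_dvd_iff_eq_0) auto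
  moreover have "int m dvd int a - int b + int c \<longleftrightarrow> a + c = b"
    using assms by (subst int_dvd_iff_eq_0) auto
  moreover have "int m dvd int a - int b - int c \<longleftrightarrow> b + c = a"
    using assms by (subst int_dvd_iff_eq_0) auto
  ultimately show ?thesis
    unfolding twocos_mult distrib_right sum.distrib sum_twocos[OF m] by (simp add: zero_sum_count_def)
qed

fun cos_term :: "nat \<Rightarrow> complex \<times> complex \<times> nat \<Rightarrow> nat \<Rightarrow> complex" where
  "cos_term m (p, b, a) k = p + b * twocos m (int a) k"

fun index_within :: "nat \<Rightarrow> complex \<times> complex \<times> nat \<Rightarrow> bool" where
  "index_within h (p, b, a) \<longleftrightarrow> (b \<noteq> 0 \<longrightarrow> a \<in> {1..h})"

fun cos_term_prod_sum ::
  "nat \<Rightarrow> nat \<Rightarrow> complex \<times> complex \<times> nat \<Rightarrow> complex \<times> complex \<times> nat \<Rightarrow> complex \<times> complex \<times> nat \<Rightarrow> complex"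
where
  "cos_term_prod_sum m h (p1, b1, a1) (p2, b2, a2) (p3, b3, a3) =
     p1 * p2 * p3 * of_nat h - (p1 * p2 * b3 + p1 * b2 * p3 + b1 * p2 * p3)
     + p1 * b2 * b3 * (of_nat m * of_bool (a2 = a3) - 2)
     + b1 * p2 * b3 * (of_nat m * of_bool (a1 = a3) - 2)
     + b1 * b2 * p3 * (of_nat m * of_bool (a1 = a2) - 2)
     + b1 * b2 * b3 * (of_nat m * of_nat (zero_sum_count m a1 a2 a3) - 4)"

lemma sum_cos_term_prod:
  assumes m: "m = 2 * h + 1"
    and "index_within h t1" "index_within h t2" "index_within h t3"
  shows "(\<Sum>k\<in>{1..h}. cos_term m t1 k * cos_term m t2 k * cos_term m t3 k) = cos_term_prod_sum m h t1 t2 t3"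
proof -
  obtain p1 b1 a1 p2 b2 a2 p3 b3 a3 where t: "t1 = (p1, b1, a1)" "t2 = (p2, b2, a2)" "t3 = (p3, b3, a3)"
    by (metis prod_cases3)
  have a: "b1 \<noteq> 0 \<longrightarrow> a1 \<in> {1..h}" "b2 \<noteq> 0 \<longrightarrow> a2 \<in> {1..h}" "b3 \<noteq> 0 \<longrightarrow> a3 \<in> {1..h}"
    using assms t by simp_all
  let ?X = "\<lambda>a k. twocos m (int a) k"
  have S1: "b * (\<Sum>k\<in>{1..h}. ?X a k) = - b" if "b \<noteq> 0 \<longrightarrow> a \<in> {1..h}" for b :: complex and a
    using that sum_twocos_single[OF m, of a] by (cases "b = 0") auto
  have S2: "b * b' * (\<Sum>k\<in>{1..h}. ?X a k * ?X a' k) = b * b' * (of_nat m * of_bool (a = a') - 2)"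
    if "b \<noteq> 0 \<longrightarrow> a \<in> {1..h}" "b' \<noteq> 0 \<longrightarrow> a' \<in> {1..h}" for b b' :: complex and a a'
    using that sum_twocos_pair[OF m, of a a'] by (cases "b = 0"; cases "b' = 0") auto
  have S3: "b1 * b2 * b3 * (\<Sum>k\<in>{1..h}. ?X a1 k * ?X a2 k * ?X a3 k)
      = b1 * b2 * b3 * (of_nat m * of_nat (zero_sum_count m a1 a2 a3) - 4)"
    using a sum_twocos_triple[OF m, of a1 a2 a3] by (cases "b1 = 0"; cases "b2 = 0"; cases "b3 = 0") auto
  have "(\<Sum>k\<in>{1..h}. (p1 + b1 * ?X a1 k) * (p2 + b2 * ?X a2 k) * (p3 + b3 * ?X a3 k)) =
      p1 * p2 * p3 * of_nat h + p1 * p2 * (b3 * (\<Sum>k\<in>{1..h}. ?X a3 k))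
      + p1 * p3 * (b2 * (\<Sum>k\<in>{1..h}. ?X a2 k)) + p2 * p3 * (b1 * (\<Sum>k\<in>{1..h}. ?X a1 k))
      + p1 * (b2 * b3 * (\<Sum>k\<in>{1..h}. ?X a2 k * ?X a3 k)) + p2 * (b1 * b3 * (\<Sum>k\<in>{1..h}. ?X a1 k * ?X a3 k))
      + p3 * (b1 * b2 * (\<Sum>k\<in>{1..h}. ?X a1 k * ?X a2 k))
      + b1 * b2 * b3 * (\<Sum>k\<in>{1..h}. ?X a1 k * ?X a2 k * ?X a3 k)"
    by (simp add: sum.distrib sum_distrib_left algebra_simps)
  also have "\<dots> = cos_term_prod_sum m h t1 t2 t3"
    unfolding S1[OF a(1)] S1[OF a(2)] S1[OF a(3)] S2[OF a(2) a(3)] S2[OF a(1) a(3)] S2[OF a(1) a(2)] S3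
    by (simp add: t algebra_simps)
  finally show ?thesis
    by (simp add: t)
qed

(* Column entries are cos_term (q - 1) (coeffs_A x) k at A_k and cos_term (q + 1) (coeffs_B x) k
   at B_k; the index is a dummy when the coefficient of twocos vanishes. *)
definition coeffs_A :: "lbl \<Rightarrow> complex \<times> complex \<times> nat" where
  "coeffs_A x = (case x of One \<Rightarrow> (1, 0, 1) | Xm c \<Rightarrow> (0, 0, c) | Xq \<Rightarrow> (1, 0, 1) | Xp c \<Rightarrow> (0, 1, c))"

definition coeffs_B :: "lbl \<Rightarrow> complex \<times> complex \<times> nat" where
  "coeffs_B x = (case x of One \<Rightarrow> (1, 0, 1) | Xm c \<Rightarrow> (0, -1, c) | Xq \<Rightarrow> (-1, 0, 1) | Xp c \<Rightarrow> (0, 0, c))"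

lemma lam_A: "lam q x (A k) = cos_term (q - 1) (coeffs_A x) k"
  by (cases x) (simp_all add: coeffs_A_def zeta_power_add_inverse)

lemma lam_B: "lam q x (B k) = cos_term (q + 1) (coeffs_B x) k"
  by (cases x) (simp_all add: coeffs_B_def zeta_power_add_inverse)

lemma cnj_lam: "cnj (lam q x s) = lam q x s"
  by (cases s; cases x) (simp_all add: zeta_power_add_inverse cnj_twocos)

lemma colnorm_eq: "colnorm q s = (\<Sum>x\<in>basis q. (lam q x s)\<^sup>2)"
proof -
  have "complex_of_real ((cmod z)\<^sup>2) = z\<^sup>2" if "cnj z = z" for z
    using complex_norm_square[of z] that by (simp add: power2_eq_square)
  then show ?thesis
    unfolding colnorm_def by (simp add: cnj_lam)
qed

lemma sum_basis:
  "(\<Sum>x\<in>basis q. g x) = g One + g Xq + (\<Sum>c\<in>{1..q div 2}. g (Xm c)) + (\<Sum>c\<in>{1..(q - 2) div 2}. g (Xp c))"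
proof -
  have "basis q = insert One (insert Xq (Xm ` {1..q div 2} \<union> Xp ` {1..(q - 2) div 2}))"
    by (auto simp: basis_def)
  moreover have "(\<Sum>x\<in>Xm ` M \<union> Xp ` P. g x) = (\<Sum>c\<in>M. g (Xm c)) + (\<Sum>c\<in>P. g (Xp c))"
    if "finite M" "finite P" for M P
    using that by (subst sum.union_disjoint) (auto simp: sum.reindex inj_on_def)
  ultimately show ?thesis
    by (simp add: image_iff add.assoc)
qed

lemma sum_cols:
  "(\<Sum>s\<in>cols q. g s) = g C0 + g C1 + (\<Sum>k\<in>{1..(q - 2) div 2}. g (A k)) + (\<Sum>k\<in>{1..q div 2}. g (B k))"
proof -
  have "cols q = insert C0 (insert C1 (A ` {1..(q - 2) div 2} \<union> B ` {1..q div 2}))"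
    by (auto simp: cols_def)
  moreover have "(\<Sum>s\<in>A ` M \<union> B ` P. g s) = (\<Sum>k\<in>M. g (A k)) + (\<Sum>k\<in>P. g (B k))"
    if "finite M" "finite P" for M P
    using that by (subst sum.union_disjoint) (auto simp: sum.reindex inj_on_def)
  ultimately show ?thesis
    by (simp add: image_iff add.assoc)
qed

lemma card_basis: "card (basis q) = 2 + q div 2 + (q - 2) div 2"
  using sum_basis[of "\<lambda>_. 1 :: nat" q] by simp

lemma fus_commute: "fus q x y z = fus q y x z"
  unfolding fus_def by (simp add: ac_simps)

section \<open>Fusion rules\<close>

locale even_q =
  fixes q h :: nat
  assumes q_eq: "q = 2 * h" and h_pos: "1 \<le> h"
begin

lemma even_q: "even q" and odd_q_minus_1: "odd (q - 1)"
  using q_eq h_pos by simp_all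

lemma q_ge_2: "2 \<le> q"
  using q_eq h_pos by simp

lemma div_2 [simp]: "q div 2 = h" "(q - 2) div 2 = h - 1"
  using q_eq by auto

(* Stated with Suc 0, the simp normal form of 1 :: nat. *)
lemma of_nat_q:
  "(of_nat q :: complex) = 2 * of_nat h" "(of_nat (q + 1) :: complex) = 2 * of_nat h + 1"
  "(of_nat (q - Suc 0) :: complex) = 2 * of_nat h - 1" "(of_nat (h - Suc 0) :: complex) = of_nat h - 1"
  using q_eq h_pos by (simp_all add: of_nat_diff)

lemma mem_basis [simp]:
  "One \<in> basis q" "Xq \<in> basis q" "Xm c \<in> basis q \<longleftrightarrow> c \<in> {1..h}" "Xp c \<in> basis q \<longleftrightarrow> c \<in> {1..h - 1}"
  by (auto simp: basis_def)

lemma basis_cases [consumes 1, case_names One Xm Xq Xp]: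
  assumes "x \<in> basis q"
  obtains "x = One" | c where "x = Xm c" "c \<in> {1..h}" | "x = Xq" | c where "x = Xp c" "c \<in> {1..h - 1}"
  using assms by (auto simp: basis_def)

lemma index_within_coeffs:
  assumes "x \<in> basis q"
  shows "index_within (h - 1) (coeffs_A x)" "index_within h (coeffs_B x)"
  using assms by (cases rule: basis_cases; simp add: coeffs_A_def coeffs_B_def)+

lemma colnorm_C0: "colnorm q C0 = of_nat q * (of_nat q - 1) * (of_nat q + 1)"
  unfolding colnorm_eq sum_basis by (simp add: of_nat_q algebra_simps power2_eq_square)

lemma colnorm_C1: "colnorm q C1 = of_nat q"
  unfolding colnorm_eq sum_basis by (simp add: of_nat_q)

lemma colnorm_A:
  assumes "k \<in> {1..h - 1}"
  shows "colnorm q (A k) = of_nat q - 1"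
proof -
  have "q - 1 = 2 * (h - 1) + 1"
    using q_eq h_pos by simp
  from sum_twocos_pair[OF this assms assms]
  have "(\<Sum>c\<in>{1..h - 1}. (lam q (Xp c) (A k))\<^sup>2) = of_nat q - 3"
    by (simp add: lam_A coeffs_A_def twocos_commute power2_eq_square of_nat_q)
  then show ?thesis
    unfolding colnorm_eq sum_basis by (simp add: lam_A coeffs_A_def)
qed

lemma colnorm_B:
  assumes "k \<in> {1..h}"
  shows "colnorm q (B k) = of_nat q + 1"
proof -
  have "q + 1 = 2 * h + 1"
    using q_eq by simp
  from sum_twocos_pair[OF this assms assms]
  have "(\<Sum>c\<in>{1..h}. (lam q (Xm c) (B k))\<^sup>2) = of_nat q - 1"
    by (simp add: lam_B coeffs_B_def twocos_commute power2_eq_square of_nat_q)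
  then show ?thesis
    unfolding colnorm_eq sum_basis by (simp add: lam_B coeffs_B_def)
qed

lemma of_nat_q_nonzero:
  "(of_nat q :: complex) \<noteq> 0" "(of_nat q :: complex) - 1 \<noteq> 0" "(of_nat q :: complex) + 1 \<noteq> 0"
  using q_ge_2 by (auto simp: complex_eq_iff)

lemma fus_closed:
  assumes "x \<in> basis q" "y \<in> basis q" "z \<in> basis q"
  shows "fus q x y z =
      lam q x C0 * lam q y C0 * lam q z C0 / (of_nat q * (of_nat q - 1) * (of_nat q + 1))
    + lam q x C1 * lam q y C1 * lam q z C1 / of_nat q
    + cos_term_prod_sum (q - 1) (h - 1) (coeffs_A x) (coeffs_A y) (coeffs_A z) / (of_nat q - 1)
    + cos_term_prod_sum (q + 1) h (coeffs_B x) (coeffs_B y) (coeffs_B z) / (of_nat q + 1)"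
proof -
  have "q - 1 = 2 * (h - 1) + 1" "q + 1 = 2 * h + 1"
    using q_eq h_pos by simp_all
  note sum_A = sum_cos_term_prod[OF this(1) index_within_coeffs(1)[OF assms(1)]
      index_within_coeffs(1)[OF assms(2)] index_within_coeffs(1)[OF assms(3)]]
   and sum_B = sum_cos_term_prod[OF this(2) index_within_coeffs(2)[OF assms(1)]
      index_within_coeffs(2)[OF assms(2)] index_within_coeffs(2)[OF assms(3)]]
  have sum_colnorm:
    "(\<Sum>k\<in>{1..h - 1}. f k / colnorm q (A k)) = (\<Sum>k\<in>{1..h - 1}. f k) / (of_nat q - 1)"
    "(\<Sum>k\<in>{1..h}. f k / colnorm q (B k)) = (\<Sum>k\<in>{1..h}. f k) / (of_nat q + 1)" for f
    unfolding sum_divide_distrib by (auto intro!: sum.cong simp: colnorm_A colnorm_B)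
  show ?thesis
    unfolding fus_def cnj_lam sum_cols div_2 lam_A lam_B sum_colnorm sum_A sum_B colnorm_C0 colnorm_C1 ..
qed

(* Clearing the denominators of fus_closed turns each fusion rule into a polynomial identity in h. *)
lemma fus_eqI:
  assumes "x \<in> basis q" "y \<in> basis q" "z \<in> basis q"
    and "lam q x C0 * lam q y C0 * lam q z C0
      + (of_nat q - 1) * (of_nat q + 1) * (lam q x C1 * lam q y C1 * lam q z C1)
      + of_nat q * (of_nat q + 1) * cos_term_prod_sum (q - 1) (h - 1) (coeffs_A x) (coeffs_A y) (coeffs_A z)
      + of_nat q * (of_nat q - 1) * cos_term_prod_sum (q + 1) h (coeffs_B x) (coeffs_B y) (coeffs_B z)
      = of_nat q * (of_nat q - 1) * (of_nat q + 1) * t"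
  shows "fus q x y z = t"
proof -
  have clear_denominators:
    "Q * (Q - 1) * (Q + 1) * (a / (Q * (Q - 1) * (Q + 1)) + b / Q + c / (Q - 1) + d / (Q + 1))
      = a + (Q - 1) * (Q + 1) * b + Q * (Q + 1) * c + Q * (Q - 1) * d"
    if "Q \<noteq> 0" "Q - 1 \<noteq> 0" "Q + 1 \<noteq> 0" for Q a b c d :: complex
  proof -
    have "Q * (Q - 1) * (Q + 1) * (a / (Q * (Q - 1) * (Q + 1))) = a"
      "Q * (Q - 1) * (Q + 1) * (b / Q) = (Q - 1) * (Q + 1) * b"
      "Q * (Q - 1) * (Q + 1) * (c / (Q - 1)) = Q * (Q + 1) * c"
      "Q * (Q - 1) * (Q + 1) * (d / (Q + 1)) = Q * (Q - 1) * d"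
      using that by (simp_all add: ac_simps)
    then show ?thesis
      by (simp only: distrib_left)
  qed
  have "of_nat q * (of_nat q - 1) * (of_nat q + 1) * fus q x y z = of_nat q * (of_nat q - 1) * (of_nat q + 1) * t"
    unfolding fus_closed[OF assms(1-3)] clear_denominators[OF of_nat_q_nonzero] assms(4) ..
  then show ?thesis
    using of_nat_q_nonzero by simp
qed

lemma fus_One:
  assumes "y \<in> basis q" "z \<in> basis q"
  shows "fus q One y z = (if y = z then 1 else 0)"
  by (cases rule: basis_cases[OF assms(1)]; cases rule: basis_cases[OF assms(2)])
    (auto intro!: fus_eqI simp: coeffs_A_def coeffs_B_def of_nat_q algebra_simps)

lemma fus_Xm_Xm:
  assumes "c1 \<in> {1..h}" "c2 \<in> {1..h}" "z \<in> basis q"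
  shows "fus q (Xm c1) (Xm c2) z = of_nat (case z of
           One \<Rightarrow> (if c1 = c2 then 1 else 0)
         | Xm c3 \<Rightarrow> (if c1 + c2 + c3 \<notin> {q + 1, 2 * max c1 (max c2 c3)} then 1 else 0)
         | Xq \<Rightarrow> (if c1 = c2 then 0 else 1)
         | Xp c3 \<Rightarrow> 1)"
  using assms(3) even_q
  by (cases rule: basis_cases)
    (use assms(1,2) in \<open>auto intro!: fus_eqI simp: coeffs_A_def coeffs_B_def of_nat_q algebra_simps zero_sum_count_eq\<close>)

lemma fus_Xm_Xq:
  assumes "c1 \<in> {1..h}" "z \<in> basis q"
  shows "fus q (Xm c1) Xq z = of_nat (case z of
           One \<Rightarrow> 0
         | Xm c2 \<Rightarrow> (if c1 = c2 then 0 else 1)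
         | Xq \<Rightarrow> 1
         | Xp c2 \<Rightarrow> 1)"
  using assms(2)
  by (cases rule: basis_cases)
    (use assms(1) in \<open>auto intro!: fus_eqI simp: coeffs_A_def coeffs_B_def of_nat_q algebra_simps\<close>)

lemma fus_Xm_Xp:
  assumes "c1 \<in> {1..h}" "c2 \<in> {1..h - 1}" "z \<in> basis q"
  shows "fus q (Xm c1) (Xp c2) z = of_nat (case z of One \<Rightarrow> 0 | Xm c3 \<Rightarrow> 1 | Xq \<Rightarrow> 1 | Xp c3 \<Rightarrow> 1)"
  using assms(3)
  by (cases rule: basis_cases)
    (use assms(1,2) in \<open>auto intro!: fus_eqI simp: coeffs_A_def coeffs_B_def of_nat_q algebra_simps\<close>)

lemma fus_Xq_Xq:
  assumes "z \<in> basis q"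
  shows "fus q Xq Xq z = 1"
  using assms
  by (cases rule: basis_cases) (auto intro!: fus_eqI simp: coeffs_A_def coeffs_B_def of_nat_q algebra_simps)

lemma fus_Xq_Xp:
  assumes "c1 \<in> {1..h - 1}" "z \<in> basis q"
  shows "fus q Xq (Xp c1) z = of_nat (case z of
           One \<Rightarrow> 0
         | Xm c2 \<Rightarrow> 1
         | Xq \<Rightarrow> 1
         | Xp c2 \<Rightarrow> 1 + (if c1 = c2 then 1 else 0))"
  using assms(2)
  by (cases rule: basis_cases)
    (use assms(1) in \<open>auto intro!: fus_eqI simp: coeffs_A_def coeffs_B_def of_nat_q algebra_simps\<close>)

lemma fus_Xp_Xp:
  assumes "c1 \<in> {1..h - 1}" "c2 \<in> {1..h - 1}" "z \<in> basis q"
  shows "fus q (Xp c1) (Xp c2) z = of_nat (case z of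
           One \<Rightarrow> (if c1 = c2 then 1 else 0)
         | Xm c3 \<Rightarrow> 1
         | Xq \<Rightarrow> 1 + (if c1 = c2 then 1 else 0)
         | Xp c3 \<Rightarrow> (if c1 + c2 + c3 \<in> {q - 1, 2 * max c1 (max c2 c3)} then 2 else 1))"
  using assms(3) odd_q_minus_1
  by (cases rule: basis_cases)
    (use assms(1,2) in \<open>auto intro!: fus_eqI simp: coeffs_A_def coeffs_B_def of_nat_q algebra_simps zero_sum_count_eq\<close>)

section \<open>The Frobenius-Perron dimension\<close>

lemma cols_cases [consumes 1, case_names C0 C1 A B]:
  assumes "s \<in> cols q"
  obtains "s = C0" | "s = C1" | k where "s = A k" "k \<in> {1..h - 1}" | k where "s = B k" "k \<in> {1..h}"
  using assms by (auto simp: cols_def)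

lemma sum_lam_mult_C0:
  assumes "s \<in> cols q"
  shows "(\<Sum>x\<in>basis q. lam q x s * lam q x C0) = (if s = C0 then colnorm q C0 else 0)"
  using assms
proof (cases rule: cols_cases)
  case C0
  then show ?thesis
    by (simp add: colnorm_eq power2_eq_square)
next
  case C1
  then show ?thesis
    unfolding sum_basis by (simp add: of_nat_q algebra_simps)
next
  case (A k)
  have "q - 1 = 2 * (h - 1) + 1"
    using q_eq h_pos by simp
  then have "(\<Sum>c\<in>{1..h - 1}. lam q (Xp c) (A k) * lam q (Xp c) C0) = - (of_nat q + 1)"
    using sum_twocos_single[OF _ A(2)]
    by (simp add: lam_A coeffs_A_def twocos_commute sum_distrib_right[symmetric])
  then show ?thesis
    unfolding sum_basis using A(1) by (simp add: lam_A coeffs_A_def)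
next
  case (B k)
  have "q + 1 = 2 * h + 1"
    using q_eq by simp
  then have "(\<Sum>c\<in>{1..h}. lam q (Xm c) (B k) * lam q (Xm c) C0) = of_nat q - 1"
    using sum_twocos_single[OF _ B(2)]
    by (simp add: lam_B coeffs_B_def twocos_commute sum_distrib_right[symmetric] sum_negf)
  then show ?thesis
    unfolding sum_basis using B(1) by (simp add: lam_B coeffs_B_def)
qed

definition dim_C0 :: "lbl \<Rightarrow> complex" where
  "dim_C0 x = (if x \<in> basis q then lam q x C0 else 0)"

lemma dim_C0_mult:
  assumes "x \<in> basis q" "y \<in> basis q"
  shows "dim_C0 x * dim_C0 y = (\<Sum>z\<in>basis q. fus q x y z * dim_C0 z)"
proof -
  have "(\<Sum>z\<in>basis q. fus q x y z * dim_C0 z)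
      = (\<Sum>s\<in>cols q. lam q x s * lam q y s / colnorm q s * (\<Sum>z\<in>basis q. lam q z s * lam q z C0))"
    unfolding fus_def dim_C0_def cnj_lam sum_distrib_left sum_distrib_right
    by (subst sum.swap) (simp add: ac_simps)
  also have "\<dots> = lam q x C0 * lam q y C0"
    using of_nat_q_nonzero by (simp add: sum_lam_mult_C0 colnorm_C0 if_distrib sum.If_cases cols_def)
  finally show ?thesis
    using assms by (simp add: dim_C0_def)
qed

lemma is_pos_hom_dim_C0: "is_pos_hom q dim_C0"
proof -
  have "Im (dim_C0 x) = 0 \<and> 0 < Re (dim_C0 x)" if "x \<in> basis q" for x
    using that q_ge_2 by (cases rule: basis_cases) (auto simp: dim_C0_def)
  then show ?thesis
    unfolding is_pos_hom_def using dim_C0_mult by (auto simp: dim_C0_def)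
qed

context
  fixes f assumes f: "is_pos_hom q f"
begin

lemma pos_hom_mult: "x \<in> basis q \<Longrightarrow> y \<in> basis q \<Longrightarrow> f x * f y = (\<Sum>z\<in>basis q. fus q x y z * f z)"
  using f by (simp add: is_pos_hom_def)

lemma pos_hom_One: "f One = 1"
  using f by (simp add: is_pos_hom_def)

lemma pos_hom_Re_pos: "x \<in> basis q \<Longrightarrow> 0 < Re (f x)"
  using f by (simp add: is_pos_hom_def)

lemma pos_hom_Xq_square:
  "f Xq * f Xq = 1 + f Xq + (\<Sum>c\<in>{1..h}. f (Xm c)) + (\<Sum>c\<in>{1..h - 1}. f (Xp c))"
  using pos_hom_mult[of Xq Xq] by (simp add: fus_Xq_Xq sum_basis pos_hom_One)

lemma pos_hom_Xm:
  assumes c: "c \<in> {1..h}"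
  shows "f (Xm c) = f Xq - 1"
proof -
  have "f Xq * f (Xm c) = (\<Sum>z\<in>basis q. fus q (Xm c) Xq z * f z)"
    using pos_hom_mult[of Xq "Xm c"] c by (simp add: fus_commute)
  also have "\<dots> = f Xq + ((\<Sum>c'\<in>{1..h}. f (Xm c')) - f (Xm c)) + (\<Sum>c'\<in>{1..h - 1}. f (Xp c'))"
    using c by (simp add: sum_basis fus_Xm_Xq sum.remove[of _ c])
  finally have "(f Xq + 1) * f (Xm c) = (f Xq + 1) * (f Xq - 1)"
    using pos_hom_Xq_square by (simp add: algebra_simps)
  moreover have "f Xq + 1 \<noteq> 0"
    using pos_hom_Re_pos[of Xq] by (auto simp: complex_eq_iff)
  ultimately show ?thesis
    by simp
qed

lemma pos_hom_Xp:
  assumes c: "c \<in> {1..h - 1}"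
  shows "f (Xp c) = f Xq + 1"
proof -
  have "f Xq * f (Xp c) = (\<Sum>z\<in>basis q. fus q Xq (Xp c) z * f z)"
    using pos_hom_mult[of Xq "Xp c"] c by simp
  also have "\<dots> = (\<Sum>c'\<in>{1..h}. f (Xm c')) + f Xq + ((\<Sum>c'\<in>{1..h - 1}. f (Xp c')) + f (Xp c))"
    using c by (simp add: sum_basis fus_Xq_Xp sum.remove[of _ c])
  finally have "(f Xq - 1) * f (Xp c) = (f Xq - 1) * (f Xq + 1)"
    using pos_hom_Xq_square by (simp add: algebra_simps)
  moreover have "f Xq \<noteq> 1"
    using pos_hom_Re_pos[of "Xm 1"] pos_hom_Xm[of 1] h_pos by auto
  ultimately show ?thesis
    by simp
qed

lemma pos_hom_Xq: "f Xq = of_nat q"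
proof -
  have "(\<Sum>c\<in>{1..h}. f (Xm c)) = of_nat h * (f Xq - 1)"
    by (simp add: pos_hom_Xm)
  moreover have "(\<Sum>c\<in>{1..h - 1}. f (Xp c)) = of_nat (h - 1) * (f Xq + 1)"
    by (simp add: pos_hom_Xp)
  ultimately have "f Xq * f Xq = 1 + f Xq + of_nat h * (f Xq - 1) + of_nat (h - 1) * (f Xq + 1)"
    using pos_hom_Xq_square by simp
  also have "\<dots> = f Xq * of_nat q"
    by (simp add: of_nat_q algebra_simps)
  finally have "f Xq * f Xq = f Xq * of_nat q" .
  moreover have "f Xq \<noteq> 0"
    using pos_hom_Re_pos[of Xq] by auto
  ultimately show ?thesis
    by simp
qed

lemma pos_hom_eq_dim_C0: "f = dim_C0"
proof
  fix x
  show "f x = dim_C0 x"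
  proof (cases "x \<in> basis q")
    case True
    then show ?thesis
      by (cases rule: basis_cases) (simp_all add: dim_C0_def pos_hom_One pos_hom_Xm pos_hom_Xp pos_hom_Xq)
  next
    case False
    then show ?thesis
      using f by (simp add: is_pos_hom_def dim_C0_def)
  qed
qed

end

lemma fpdim_eq_dim_C0: "fpdim q = dim_C0"
  unfolding fpdim_def using is_pos_hom_dim_C0 pos_hom_eq_dim_C0 by (rule the_equality)

end

theorem theorem4p3:
  fixes q :: nat
  assumes "even q" and "q \<ge> 2"
  shows
   "card (basis q) = q + 1 \<and>
    fpdim_ring q = of_nat (q * (q\<^sup>2 - 1)) \<and>
    fpdim q One = 1 \<and>
    (\<forall>c\<in>{1..q div 2}. fpdim q (Xm c) = of_nat (q - 1)) \<and>
    fpdim q Xq = of_nat q \<and>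
    (\<forall>c\<in>{1..(q - 2) div 2}. fpdim q (Xp c) = of_nat (q + 1)) \<and>
    (\<forall>x\<in>basis q. \<forall>y\<in>basis q. \<forall>z\<in>basis q. fus q x y z = fus q y x z) \<and>
    (\<forall>y\<in>basis q. \<forall>z\<in>basis q. fus q One y z = (if y = z then 1 else 0)) \<and>
    (\<forall>c1\<in>{1..q div 2}. \<forall>c2\<in>{1..q div 2}. \<forall>z\<in>basis q.
       fus q (Xm c1) (Xm c2) z = of_nat (case z of
           One \<Rightarrow> (if c1 = c2 then 1 else 0)
         | Xm c3 \<Rightarrow> (if c1 + c2 + c3 \<notin> {q + 1, 2 * max c1 (max c2 c3)} then 1 else 0)
         | Xq \<Rightarrow> (if c1 = c2 then 0 else 1)
         | Xp c3 \<Rightarrow> 1)) \<and>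
    (\<forall>c1\<in>{1..q div 2}. \<forall>z\<in>basis q.
       fus q (Xm c1) Xq z = of_nat (case z of
           One \<Rightarrow> 0
         | Xm c2 \<Rightarrow> (if c1 = c2 then 0 else 1)
         | Xq \<Rightarrow> 1
         | Xp c2 \<Rightarrow> 1)) \<and>
    (\<forall>c1\<in>{1..q div 2}. \<forall>c2\<in>{1..(q - 2) div 2}. \<forall>z\<in>basis q.
       fus q (Xm c1) (Xp c2) z = of_nat (case z of
           One \<Rightarrow> 0
         | Xm c3 \<Rightarrow> 1
         | Xq \<Rightarrow> 1
         | Xp c3 \<Rightarrow> 1)) \<and>
    (\<forall>z\<in>basis q. fus q Xq Xq z = 1) \<and>
    (\<forall>c1\<in>{1..(q - 2) div 2}. \<forall>z\<in>basis q.
       fus q Xq (Xp c1) z = of_nat (case z of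
           One \<Rightarrow> 0
         | Xm c2 \<Rightarrow> 1
         | Xq \<Rightarrow> 1
         | Xp c2 \<Rightarrow> 1 + (if c1 = c2 then 1 else 0))) \<and>
    (\<forall>c1\<in>{1..(q - 2) div 2}. \<forall>c2\<in>{1..(q - 2) div 2}. \<forall>z\<in>basis q.
       fus q (Xp c1) (Xp c2) z = of_nat (case z of
           One \<Rightarrow> (if c1 = c2 then 1 else 0)
         | Xm c3 \<Rightarrow> 1
         | Xq \<Rightarrow> 1 + (if c1 = c2 then 1 else 0)
         | Xp c3 \<Rightarrow> (if c1 + c2 + c3 \<in> {q - 1, 2 * max c1 (max c2 c3)} then 2 else 1)))"
proof -
  obtain h where "q = 2 * h"
    using assms(1) by (rule evenE)
  then interpret even_q q h
    using assms(2) by unfold_locales auto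
  have "card (basis q) = q + 1"
    using card_basis q_eq h_pos by simp
  moreover have "fpdim_ring q = of_nat (q * (q\<^sup>2 - 1))"
  proof -
    have "fpdim_ring q = colnorm q C0"
      by (simp add: fpdim_ring_def fpdim_eq_dim_C0 colnorm_eq dim_C0_def)
    also have "\<dots> = of_nat (q * (q\<^sup>2 - 1))"
      using assms(2) by (simp add: colnorm_C0 of_nat_diff power2_eq_square algebra_simps)
    finally show ?thesis .
  qed
  ultimately show ?thesis
    using q_ge_2
    by (simp add: fpdim_eq_dim_C0 dim_C0_def of_nat_diff fus_One fus_Xm_Xm fus_Xm_Xq
        fus_Xm_Xp fus_Xq_Xq fus_Xq_Xp fus_Xp_Xp) (simp add: fus_commute)
qed

end
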